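(* Let $f,g:\mathbb{R}^{N}\rightarrow (-\infty ,\infty ]$ be Borel measurable, and suppose there are constants $c>0$ and $\alpha>0$ such that $f(x)\geq c|x|^{\alpha }$ and $g(x)\geq c|x|^{\alpha }$ for $|x|$ large enough. Let $m_f:=\inf f$, $m_g:=\inf g$, $f_+:=\max\{f,0\}$, $m_{f_+}:=\inf f_+$. Then: (i) If $m_{f},m_{g}\in \mathbb{R}$ and $m_{f}+m_{g}>0$, then $(f\Box g)^{-1}\in L^{p}(\mathbb{R}^N)$ for every $p\geq 1$ with $p>N/\alpha$. (ii) If $g\geq 0$ and $m_{f_{+}}+m_{g}>0$, then $(f\veebar g)^{-1}\in L^{p}(\mathbb{R}^N)$ for every $p\geq 1$ with $p>N/\alpha$.
   Context: $(f\Box g)(x):=\inf_{y}(f(x-y)+g(y))$ and $(f\veebar g)(x):=\inf_{y}\max\{f(x-y),g(y)\}$. For $h\ge0$, $h^{-1}:=1/h$ (with $1/0=\infty$, $1/\infty=0$). *)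

theory Defs
  imports "HOL-Analysis.Analysis"
begin

definition infconv :: "('a::real_vector \<Rightarrow> ereal) \<Rightarrow> ('a \<Rightarrow> ereal) \<Rightarrow> 'a \<Rightarrow> ereal" where
  "infconv f g x = (INF y. f (x - y) + g y)"

definition levconv :: "('a::real_vector \<Rightarrow> ereal) \<Rightarrow> ('a \<Rightarrow> ereal) \<Rightarrow> 'a \<Rightarrow> ereal" where
  "levconv f g x = (INF y. max (f (x - y)) (g y))"

text \<open>Reciprocal of a nonnegative extended real, 1/0 = infinity, 1/infinity = 0
  (value on negative arguments is irrelevant; set to 0).\<close>
definition recip :: "ereal \<Rightarrow> ennreal" where
  "recip h = (if h = 0 then top else if h = \<infinity> then 0
              else if h < 0 then 0 else ennreal (1 / real_of_ereal h))"

definition in_Lp :: "('a::euclidean_space \<Rightarrow> ennreal) \<Rightarrow> real \<Rightarrow> bool" where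
  "in_Lp h p \<longleftrightarrow> h \<in> borel_measurable lebesgue \<and> (AE x in lebesgue. h x < top) \<and>
     (\<integral>\<^sup>+ x. ennreal (enn2real (h x) powr p) \<partial>lebesgue) < top"

end

theory Submission
  imports Defs
begin

text \<open>The sublevel set \<open>{f \<box> g < a}\<close> is the image of the Borel set \<open>{(z, y). f z + g y < a}\<close>
  under addition, and likewise for \<open>f \<veebar> g\<close>; such images are Souslin sets, hence Lebesgue
  measurable. Both convolutions are bounded below by a positive constant coming from the infima,
  and since for \<open>|x| \<ge> 2R\<close> one of \<open>x - y\<close>, \<open>y\<close> has norm at least \<open>|x|/2\<close>, both grow like
  \<open>c 2\<^sup>-\<^sup>\<alpha> |x|\<^sup>\<alpha>\<close>. So \<open>(1/h)\<^sup>p\<close> is bounded on a ball and by a multiple of \<open>|x|\<^sup>-\<^sup>\<alpha>\<^sup>p\<close>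
  outside it, which is integrable because \<open>\<alpha>p > N\<close> (sum over dyadic shells).\<close>

section \<open>The Souslin operation\<close>

definition seq_prefix :: "(nat \<Rightarrow> nat) \<Rightarrow> nat \<Rightarrow> nat list" where
  "seq_prefix \<sigma> n = map \<sigma> [0..<n]"

definition souslin :: "(nat list \<Rightarrow> 'a set) \<Rightarrow> 'a set" where
  "souslin F = (\<Union>\<sigma>. \<Inter>n. F (seq_prefix \<sigma> n))"

text \<open>In Polish spaces these are exactly the analytic sets.\<close>
definition souslin_set :: "'a::topological_space set \<Rightarrow> bool" where
  "souslin_set A \<longleftrightarrow> (\<exists>F. (\<forall>s. closed (F s)) \<and> A = souslin F)"

lemma seq_prefix_0 [simp]: "seq_prefix \<sigma> 0 = []"
  by (simp add: seq_prefix_def)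

lemma length_seq_prefix [simp]: "length (seq_prefix \<sigma> n) = n"
  by (simp add: seq_prefix_def)

lemma seq_prefix_Suc: "seq_prefix \<sigma> (Suc n) = seq_prefix \<sigma> n @ [\<sigma> n]"
  by (simp add: seq_prefix_def)

lemma seq_prefix_Suc_Cons: "seq_prefix \<sigma> (Suc n) = \<sigma> 0 # seq_prefix (\<lambda>k. \<sigma> (Suc k)) n"
  by (induction n) (simp_all add: seq_prefix_Suc)

lemma seq_prefix_case_nat: "seq_prefix (case_nat i \<tau>) (Suc m) = i # seq_prefix \<tau> m"
  by (simp add: seq_prefix_Suc_Cons)

lemma take_seq_prefix: "k \<le> n \<Longrightarrow> take k (seq_prefix \<sigma> n) = seq_prefix \<sigma> k"
  by (simp add: seq_prefix_def take_map)

lemma nth_seq_prefix: "k < n \<Longrightarrow> seq_prefix \<sigma> n ! k = \<sigma> k"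
  by (simp add: seq_prefix_def)

definition souslin_regular :: "(nat list \<Rightarrow> 'a set) \<Rightarrow> nat list \<Rightarrow> 'a set" where
  "souslin_regular F s = (\<Inter>k\<in>{..length s}. F (take k s))"

lemma souslin_regular_seq_prefix:
  "souslin_regular F (seq_prefix \<sigma> n) = (\<Inter>k\<in>{..n}. F (seq_prefix \<sigma> k))"
  by (simp add: souslin_regular_def take_seq_prefix)

lemma souslin_regular_snoc: "souslin_regular F (s @ [k]) \<subseteq> souslin_regular F s"
  unfolding souslin_regular_def
proof (intro subsetI INT_I)
  fix x j
  assume x: "x \<in> (\<Inter>i\<in>{..length (s @ [k])}. F (take i (s @ [k])))" and j: "j \<in> {..length s}"
  have "x \<in> F (take j (s @ [k]))" using INT_D[OF x, of j] j by simp
  then show "x \<in> F (take j s)" using j by simp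
qed

lemma INT_souslin_regular_seq_prefix:
  "(\<Inter>n. souslin_regular F (seq_prefix \<sigma> n)) = (\<Inter>n. F (seq_prefix \<sigma> n))"
  unfolding souslin_regular_seq_prefix by auto

lemma souslin_souslin_regular: "souslin (souslin_regular F) = souslin F"
  unfolding souslin_def INT_souslin_regular_seq_prefix ..

lemma closed_souslin_regular: "(\<And>s. closed (F s)) \<Longrightarrow> closed (souslin_regular F s)"
  unfolding souslin_regular_def by (intro closed_INT) auto

lemma souslin_set_closed: "closed C \<Longrightarrow> souslin_set C"
  unfolding souslin_set_def souslin_def by (rule exI[of _ "\<lambda>s. C"]) auto

lemma souslin_set_countable_UN:
  assumes "\<And>i::nat. souslin_set (A i)"
  shows "souslin_set (\<Union>i. A i)"
proof -
  obtain F where F: "\<And>i s. closed (F i s)" "\<And>i. A i = souslin (F i)"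
    using assms unfolding souslin_set_def by metis
  define G where "G s = (case s of [] \<Rightarrow> UNIV | i # t \<Rightarrow> F i t)" for s
  have "closed (G s)" for s
    by (cases s) (auto simp: G_def F)
  moreover have "souslin G = (\<Union>i. A i)"
  proof (intro equalityI subsetI)
    fix x assume "x \<in> souslin G"
    then obtain \<sigma> where "\<And>n. x \<in> G (seq_prefix \<sigma> (Suc n))"
      unfolding souslin_def by auto
    then have "x \<in> F (\<sigma> 0) (seq_prefix (\<lambda>k. \<sigma> (Suc k)) n)" for n
      by (simp add: seq_prefix_Suc_Cons G_def)
    then show "x \<in> (\<Union>i. A i)"
      unfolding F souslin_def by blast
  next
    fix x assume "x \<in> (\<Union>i. A i)"
    then obtain i \<tau> where "\<And>n. x \<in> F i (seq_prefix \<tau> n)"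
      unfolding F souslin_def by blast
    then have "x \<in> G (seq_prefix (case_nat i \<tau>) n)" for n
      by (cases n) (auto simp: G_def seq_prefix_case_nat)
    then show "x \<in> souslin G"
      unfolding souslin_def by blast
  qed
  ultimately show ?thesis
    unfolding souslin_set_def by blast
qed

text \<open>Countably many paths are interleaved into one path through \<open>prod_encode\<close>; the scheme
  imposes every constraint \<open>F i\<close> that the entries of \<open>s\<close> already determine.\<close>
definition souslin_interleave :: "(nat \<Rightarrow> nat list \<Rightarrow> 'a set) \<Rightarrow> nat list \<Rightarrow> 'a set" where
  "souslin_interleave F s = \<Inter>{F i (seq_prefix (\<lambda>k. s ! prod_encode (i, k)) m) | i m.
     \<forall>k<m. prod_encode (i, k) < length s}"

lemma closed_souslin_interleave:
  "(\<And>i s. closed (F i s)) \<Longrightarrow> closed (souslin_interleave F s)"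
  unfolding souslin_interleave_def by (rule closed_Inter) auto

lemma souslin_souslin_interleave: "souslin (souslin_interleave F) = (\<Inter>i. souslin (F i))"
proof (intro equalityI subsetI)
  fix x assume "x \<in> souslin (souslin_interleave F)"
  then obtain \<tau> where x: "\<And>n. x \<in> souslin_interleave F (seq_prefix \<tau> n)"
    unfolding souslin_def by auto
  have "x \<in> F i (seq_prefix (\<lambda>k. \<tau> (prod_encode (i, k))) m)" for i m
  proof -
    obtain n where n: "\<forall>k<m. prod_encode (i, k) < n"
      using finite_nat_set_iff_bounded[of "(\<lambda>k. prod_encode (i, k)) ` {..<m}"] by auto
    have "seq_prefix (\<lambda>k. seq_prefix \<tau> n ! prod_encode (i, k)) m
        = seq_prefix (\<lambda>k. \<tau> (prod_encode (i, k))) m"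
      using n by (auto simp: seq_prefix_def nth_seq_prefix)
    moreover have "souslin_interleave F (seq_prefix \<tau> n)
        \<subseteq> F i (seq_prefix (\<lambda>k. seq_prefix \<tau> n ! prod_encode (i, k)) m)"
      unfolding souslin_interleave_def by (rule Inter_lower) (use n in auto)
    ultimately show ?thesis
      using x[of n] by auto
  qed
  then have "x \<in> souslin (F i)" for i
    unfolding souslin_def by blast
  then show "x \<in> (\<Inter>i. souslin (F i))" ..
next
  fix x assume "x \<in> (\<Inter>i. souslin (F i))"
  then have "x \<in> souslin (F i)" for i
    by blast
  then have "\<exists>\<sigma>. \<forall>m. x \<in> F i (seq_prefix \<sigma> m)" for i
    unfolding souslin_def by blast
  then obtain \<sigma> where \<sigma>: "\<And>i m. x \<in> F i (seq_prefix (\<sigma> i) m)"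
    by metis
  define \<tau> where "\<tau> n = \<sigma> (fst (prod_decode n)) (snd (prod_decode n))" for n
  have "x \<in> souslin_interleave F (seq_prefix \<tau> n)" for n
    unfolding souslin_interleave_def
  proof (rule InterI, safe)
    fix i m assume m: "\<forall>k<m. prod_encode (i, k) < length (seq_prefix \<tau> n)"
    have "seq_prefix (\<lambda>k. seq_prefix \<tau> n ! prod_encode (i, k)) m = seq_prefix (\<sigma> i) m"
      unfolding seq_prefix_def by (rule map_cong) (use m in \<open>auto simp: \<tau>_def\<close>)
    then show "x \<in> F i (seq_prefix (\<lambda>k. seq_prefix \<tau> n ! prod_encode (i, k)) m)"
      using \<sigma> by simp
  qed
  then show "x \<in> souslin (souslin_interleave F)"
    unfolding souslin_def by blast
qed

lemma souslin_set_countable_INT: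
  assumes "\<And>i::nat. souslin_set (A i)"
  shows "souslin_set (\<Inter>i. A i)"
proof -
  obtain F where F: "\<And>i s. closed (F i s)" "\<And>i. A i = souslin (F i)"
    using assms unfolding souslin_set_def by metis
  then have "(\<Inter>i. A i) = souslin (souslin_interleave F)"
    by (simp add: souslin_souslin_interleave)
  with closed_souslin_interleave[OF F(1)] show ?thesis
    unfolding souslin_set_def by (intro exI[of _ "souslin_interleave F"]) simp
qed

lemma souslin_set_open:
  assumes "open (S :: 'a::metric_space set)"
  shows "souslin_set S"
proof -
  have "fsigma_in euclidean S"
    by (rule open_imp_fsigma_in) (auto simp: assms metrizable_space_euclidean)
  then obtain C :: "nat \<Rightarrow> 'a set" where "\<And>n. closed (C n)" "S = (\<Union>n. C n)"
    unfolding fsigma_in_ascending by auto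
  then show ?thesis
    by (simp add: souslin_set_countable_UN souslin_set_closed)
qed

lemma souslin_set_borel:
  assumes "A \<in> sets (borel :: 'a::metric_space measure)"
  shows "souslin_set A"
proof -
  have "A \<in> sigma_sets UNIV {S. open S}"
    using assms by (simp add: sets_borel)
  then have "souslin_set A \<and> souslin_set (- A)"
  proof induction
    case (Basic a)
    then show ?case
      by (simp add: souslin_set_open souslin_set_closed closed_Compl)
  next
    case Empty
    then show ?case
      by (simp add: souslin_set_closed)
  next
    case (Compl a)
    then show ?case
      by (simp add: Compl_eq_Diff_UNIV[symmetric])
  next
    case (Union a)
    then show ?case
      using souslin_set_countable_UN[of a] souslin_set_countable_INT[of "\<lambda>i. - a i"]
      by (simp add: uminus_SUP)
  qed
  then show ?thesis ..
qed


section \<open>Souslin sets are Lebesgue measurable\<close>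

lemma measurable_hull:
  assumes "A \<subseteq> K" "K \<in> sets M" "emeasure M K < \<infinity>"
  obtains E where "E \<in> sets M" "A \<subseteq> E" "E \<subseteq> K"
    "\<And>C. C \<in> sets M \<Longrightarrow> A \<subseteq> C \<Longrightarrow> E - C \<in> null_sets M"
proof -
  have "A \<subseteq> space M"
    using assms sets.sets_into_space by blast
  from outer_measure_of_attain[OF this]
  obtain E0 where E0: "E0 \<in> sets M" "A \<subseteq> E0" "outer_measure_of M A = emeasure M E0"
    by blast
  define E where "E = E0 \<inter> K"
  have E: "E \<in> sets M" "A \<subseteq> E" "E \<subseteq> K"
    using E0 assms by (auto simp: E_def)
  have minimal: "emeasure M E \<le> emeasure M D" if "D \<in> sets M" "A \<subseteq> D" for D
  proof -
    have "emeasure M E \<le> emeasure M E0"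
      by (rule emeasure_mono) (auto simp: E_def E0)
    also have "\<dots> = outer_measure_of M A"
      by (simp add: E0)
    also have "\<dots> \<le> outer_measure_of M D"
      by (rule outer_measure_of_mono) fact
    finally show ?thesis
      using that by simp
  qed
  show thesis
  proof (rule that[OF E])
    fix C assume C: "C \<in> sets M" "A \<subseteq> C"
    have "emeasure M E \<le> emeasure M K"
      using E assms(2) by (intro emeasure_mono)
    then have E_fin: "emeasure M E < \<infinity>"
      using assms(3) by auto
    have "emeasure M (E \<inter> C) \<le> emeasure M E"
      using E by (intro emeasure_mono) auto
    then have fin: "emeasure M (E \<inter> C) \<noteq> \<infinity>"
      using E_fin by auto
    have "emeasure M (E - C) = emeasure M E - emeasure M (E \<inter> C)"
      using emeasure_Diff[OF fin, of E] E C by (simp add: Diff_Int)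
    also have "\<dots> = 0"
      using minimal[of "E \<inter> C"] E C E_fin by (intro diff_eq_0_ennreal) auto
    finally show "E - C \<in> null_sets M"
      using E C by (auto intro: null_setsI)
  qed
qed

definition souslin_through :: "(nat list \<Rightarrow> 'a set) \<Rightarrow> nat list \<Rightarrow> 'a set" where
  "souslin_through F s =
    {x. \<exists>\<sigma>. seq_prefix \<sigma> (length s) = s \<and> (\<forall>n. x \<in> F (seq_prefix \<sigma> n))}"

lemma souslin_through_Nil: "souslin_through F [] = souslin F"
  by (auto simp: souslin_through_def souslin_def)

lemma souslin_through_subset: "souslin_through F s \<subseteq> F s"
proof
  fix x assume "x \<in> souslin_through F s"
  then obtain \<sigma> where "seq_prefix \<sigma> (length s) = s" "\<And>n. x \<in> F (seq_prefix \<sigma> n)"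
    unfolding souslin_through_def by blast
  then show "x \<in> F s"
    by metis
qed

lemma souslin_through_snoc: "souslin_through F s \<subseteq> (\<Union>k. souslin_through F (s @ [k]))"
proof
  fix x assume "x \<in> souslin_through F s"
  then obtain \<sigma> where \<sigma>: "seq_prefix \<sigma> (length s) = s" "\<And>n. x \<in> F (seq_prefix \<sigma> n)"
    unfolding souslin_through_def by blast
  moreover have "seq_prefix \<sigma> (length (s @ [\<sigma> (length s)])) = s @ [\<sigma> (length s)]"
    using \<sigma>(1) by (simp add: seq_prefix_Suc)
  ultimately have "x \<in> souslin_through F (s @ [\<sigma> (length s)])"
    unfolding souslin_through_def by blast
  then show "x \<in> (\<Union>k. souslin_through F (s @ [k]))"
    by blast
qed

primrec greedy_path :: "(nat list \<Rightarrow> nat) \<Rightarrow> nat \<Rightarrow> nat list" where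
  "greedy_path c 0 = []"
| "greedy_path c (Suc n) = greedy_path c n @ [c (greedy_path c n)]"

lemma seq_prefix_greedy_path: "seq_prefix (\<lambda>n. c (greedy_path c n)) n = greedy_path c n"
  by (induction n) (simp_all add: seq_prefix_Suc)

lemma unextendable_Diff_subset_souslin: "D [] - (\<Union>s. D s - (\<Union>k. D (s @ [k]))) \<subseteq> souslin D"
proof
  fix x assume x: "x \<in> D [] - (\<Union>s. D s - (\<Union>k. D (s @ [k])))"
  define c where "c s = (SOME k. x \<in> D (s @ [k]))" for s
  have "x \<in> D (greedy_path c n)" for n
  proof (induction n)
    case (Suc n)
    with x have "\<exists>k. x \<in> D (greedy_path c n @ [k])"
      by blast
    then have "x \<in> D (greedy_path c n @ [c (greedy_path c n)])"
      unfolding c_def by (rule someI_ex)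
    then show ?case
      by simp
  qed (use x in simp)
  then have "x \<in> D (seq_prefix (\<lambda>n. c (greedy_path c n)) n)" for n
    by (simp only: seq_prefix_greedy_path)
  then show "x \<in> souslin D"
    unfolding souslin_def by blast
qed

text \<open>Take measurable hulls \<open>D s\<close> of the points with a path through \<open>s\<close>. Such points always
  continue into some \<open>D (s @ [k])\<close>, so the points of \<open>D []\<close> that cannot be continued form a
  null set, and all others lie in the Souslin set.\<close>
lemma (in complete_measure) souslin_in_sets:
  assumes F: "\<And>s. F s \<in> sets M" and mono: "\<And>s k. F (s @ [k]) \<subseteq> F s"
    and K: "F [] \<subseteq> K" "K \<in> sets M" "emeasure M K < \<infinity>"
  shows "souslin F \<in> sets M"
proof -
  have "F s \<subseteq> K" for s
    by (induction s rule: rev_induct) (use K mono in blast)+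
  then have fin: "emeasure M (F s) < \<infinity>" for s
    using emeasure_mono[OF _ K(2)] K(3) by (blast intro: le_less_trans)
  have "\<exists>E. E \<in> sets M \<and> souslin_through F s \<subseteq> E \<and> E \<subseteq> F s \<and>
      (\<forall>C\<in>sets M. souslin_through F s \<subseteq> C \<longrightarrow> E - C \<in> null_sets M)" for s
    by (rule measurable_hull[OF souslin_through_subset[of F s] F fin]) blast
  then obtain D where D: "\<And>s. D s \<in> sets M" "\<And>s. souslin_through F s \<subseteq> D s"
    "\<And>s. D s \<subseteq> F s"
    "\<And>s C. C \<in> sets M \<Longrightarrow> souslin_through F s \<subseteq> C \<Longrightarrow> D s - C \<in> null_sets M"
    by metis
  define Z where "Z = (\<Union>s. D s - (\<Union>k. D (s @ [k])))"
  have "Z \<in> null_sets M"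
    unfolding Z_def
  proof (rule null_sets_UN')
    fix s
    have "souslin_through F s \<subseteq> (\<Union>k. D (s @ [k]))"
      using souslin_through_snoc[of F s] D(2) by blast
    then show "D s - (\<Union>k. D (s @ [k])) \<in> null_sets M"
      using D(1) by (intro D(4)) auto
  qed simp
  have "D [] - Z \<subseteq> souslin D"
    unfolding Z_def by (rule unextendable_Diff_subset_souslin)
  also have "souslin D \<subseteq> souslin F"
    using D(3) unfolding souslin_def by blast
  finally have "D [] - Z \<subseteq> souslin F" .
  then have "D [] - souslin F \<in> sets M"
    using complete[OF _ \<open>Z \<in> null_sets M\<close>] by blast
  moreover have "souslin F \<subseteq> D []"
    using D(2)[of "[]"] by (simp add: souslin_through_Nil)
  ultimately have "D [] - (D [] - souslin F) \<in> sets M"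
    using D(1) by blast
  moreover have "D [] - (D [] - souslin F) = souslin F"
    using \<open>souslin F \<subseteq> D []\<close> by blast
  ultimately show ?thesis
    by simp
qed

lemma souslin_set_lebesgue:
  fixes A :: "'a::euclidean_space set"
  assumes "souslin_set A"
  shows "A \<in> sets lebesgue"
proof -
  obtain F where F: "\<And>s. closed (F s)" "A = souslin F"
    using assms unfolding souslin_set_def by blast
  have "A \<inter> cball 0 r \<in> sets lebesgue" for r
  proof -
    define G where "G s = souslin_regular F s \<inter> cball 0 r" for s
    have "souslin G = souslin (souslin_regular F) \<inter> cball 0 r"
      unfolding souslin_def G_def by blast
    then have "souslin G = A \<inter> cball 0 r"
      by (simp add: souslin_souslin_regular F(2))
    moreover have "souslin G \<in> sets lebesgue"
    proof (rule completion.souslin_in_sets[where K="cball 0 r"])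
      fix s
      have "closed (G s)"
        unfolding G_def using F(1) by (intro closed_Int closed_souslin_regular) auto
      then show "G s \<in> sets (completion lborel)"
        by (intro sets_completionI_sets) (simp add: borel_closed)
    next
      show "G (s @ [k]) \<subseteq> G s" for s k
        using souslin_regular_snoc[of F s k] by (auto simp: G_def)
      show "emeasure lebesgue (cball 0 r) < \<infinity>"
        using lmeasurable_cball[of 0 r] by (simp add: fmeasurable_def)
    qed (auto simp: G_def)
    ultimately show ?thesis
      by simp
  qed
  then have "(\<Union>n::nat. A \<inter> cball 0 (real n)) \<in> sets lebesgue"
    by blast
  moreover have "(\<Union>n::nat. A \<inter> cball 0 (real n)) = A"
  proof (intro equalityI subsetI)
    fix x assume "x \<in> A"
    moreover obtain n where "norm x \<le> real n"
      using real_arch_simple by blast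
    ultimately show "x \<in> (\<Union>n. A \<inter> cball 0 (real n))"
      by auto
  qed auto
  ultimately show ?thesis
    by simp
qed


section \<open>Continuous images of Souslin sets\<close>

lemma image_Inter_decseq_compact:
  fixes K :: "nat \<Rightarrow> 'b::heine_borel set" and h :: "'b \<Rightarrow> 'c::t1_space"
  assumes h: "continuous_on UNIV h" and K: "\<And>n. compact (K n)" "decseq K"
  shows "h ` (\<Inter>n. K n) = (\<Inter>n. h ` K n)"
proof
  show "(\<Inter>n. h ` K n) \<subseteq> h ` (\<Inter>n. K n)"
  proof
    fix y assume y: "y \<in> (\<Inter>n. h ` K n)"
    define L where "L n = K n \<inter> h -` {y}" for n
    have "closed (h -` {y})"
      by (rule closed_vimage[OF closed_singleton h])
    then have "compact (L n)" for n
      unfolding L_def by (rule compact_Int_closed[OF K(1)])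
    moreover have "L n \<noteq> {}" for n
      using y by (auto simp: L_def)
    moreover have "L n \<subseteq> L m" if "m \<le> n" for m n
      using K(2) that by (auto simp: L_def decseq_def)
    ultimately have "(\<Inter>n. L n) \<noteq> {}"
      by (rule compact_nest)
    then show "y \<in> h ` (\<Inter>n. K n)"
      by (auto simp: L_def)
  qed
qed blast

text \<open>The first entry of a path bounds the point, which makes the sets of the scheme compact.\<close>
definition souslin_bounded :: "(nat list \<Rightarrow> 'a::real_normed_vector set) \<Rightarrow> nat list \<Rightarrow> 'a set" where
  "souslin_bounded F s = (case s of [] \<Rightarrow> UNIV | i # t \<Rightarrow> cball 0 (real i) \<inter> souslin_regular F t)"

lemma souslin_bounded_seq_prefix_Suc:
  "souslin_bounded F (seq_prefix \<sigma> (Suc n))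
    = cball 0 (real (\<sigma> 0)) \<inter> souslin_regular F (seq_prefix (\<lambda>k. \<sigma> (Suc k)) n)"
  by (simp add: souslin_bounded_def seq_prefix_Suc_Cons)

lemma compact_souslin_bounded_Cons:
  fixes F :: "nat list \<Rightarrow> 'a::{heine_borel,real_normed_vector} set"
  shows "(\<And>s. closed (F s)) \<Longrightarrow> compact (souslin_bounded F (i # t))"
  by (simp add: souslin_bounded_def compact_Int_closed closed_souslin_regular)

lemma decseq_souslin_bounded: "decseq (\<lambda>n. souslin_bounded F (seq_prefix \<sigma> (Suc n)))"
  unfolding decseq_Suc_iff souslin_bounded_seq_prefix_Suc
  using souslin_regular_snoc[of F] by (auto simp: seq_prefix_Suc)

lemma souslin_souslin_bounded: "souslin (souslin_bounded F) = souslin F"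
proof (intro equalityI subsetI)
  fix x assume "x \<in> souslin (souslin_bounded F)"
  then obtain \<sigma> where "\<And>n. x \<in> souslin_bounded F (seq_prefix \<sigma> (Suc n))"
    unfolding souslin_def by blast
  then have "x \<in> (\<Inter>n. souslin_regular F (seq_prefix (\<lambda>k. \<sigma> (Suc k)) n))"
    unfolding souslin_bounded_seq_prefix_Suc by blast
  then show "x \<in> souslin F"
    unfolding INT_souslin_regular_seq_prefix souslin_def by blast
next
  fix x assume "x \<in> souslin F"
  then obtain \<tau> where "x \<in> (\<Inter>n. F (seq_prefix \<tau> n))"
    unfolding souslin_def by blast
  then have \<tau>: "x \<in> souslin_regular F (seq_prefix \<tau> m)" for m
    using INT_souslin_regular_seq_prefix[of F \<tau>] by blast
  obtain i :: nat where "norm x \<le> real i"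
    using real_arch_simple by blast
  with \<tau> have "x \<in> souslin_bounded F (seq_prefix (case_nat i \<tau>) n)" for n
    by (cases n) (simp_all add: souslin_bounded_def seq_prefix_case_nat)
  then show "x \<in> souslin (souslin_bounded F)"
    unfolding souslin_def by blast
qed

lemma INT_eq_INT_Suc: "X 0 = UNIV \<Longrightarrow> (\<Inter>n. X n) = (\<Inter>n. X (Suc n))"
proof (intro equalityI subsetI)
  fix x assume "X 0 = UNIV" "x \<in> (\<Inter>n. X (Suc n))"
  then have "x \<in> X n" for n
    by (cases n) auto
  then show "x \<in> (\<Inter>n. X n)" ..
qed auto

lemma souslin_set_continuous_image:
  fixes h :: "'b::{heine_borel,real_normed_vector} \<Rightarrow> 'c::t2_space"
  assumes h: "continuous_on UNIV h" and E: "souslin_set E"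
  shows "souslin_set (h ` E)"
proof -
  obtain F where F: "\<And>s. closed (F s)" "E = souslin F"
    using E unfolding souslin_set_def by blast
  define G where "G = souslin_bounded F"
  define H where "H s = (case s of [] \<Rightarrow> UNIV | i # t \<Rightarrow> h ` G s)" for s
  have closed_H: "closed (H s)" for s
  proof (cases s)
    case (Cons i t)
    have "compact (h ` G (i # t))"
      unfolding G_def using F(1)
      by (intro compact_continuous_image continuous_on_subset[OF h] compact_souslin_bounded_Cons)
        auto
    then show ?thesis
      by (simp add: H_def Cons compact_imp_closed)
  qed (simp add: H_def)
  have "(\<Inter>n. H (seq_prefix \<sigma> n)) = h ` (\<Inter>n. G (seq_prefix \<sigma> n))" for \<sigma>
  proof -
    have "(\<Inter>n. H (seq_prefix \<sigma> n)) = (\<Inter>n. h ` G (seq_prefix \<sigma> (Suc n)))"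
      by (subst INT_eq_INT_Suc) (simp_all add: H_def seq_prefix_Suc_Cons)
    also have "\<dots> = h ` (\<Inter>n. G (seq_prefix \<sigma> (Suc n)))"
      unfolding G_def using F(1)
      by (intro image_Inter_decseq_compact[symmetric, OF h] decseq_souslin_bounded)
        (simp add: seq_prefix_Suc_Cons compact_souslin_bounded_Cons)
    also have "(\<Inter>n. G (seq_prefix \<sigma> (Suc n))) = (\<Inter>n. G (seq_prefix \<sigma> n))"
      by (rule INT_eq_INT_Suc[symmetric]) (simp add: G_def souslin_bounded_def)
    finally show ?thesis .
  qed
  then have "souslin H = h ` souslin G"
    unfolding souslin_def by (auto simp: image_UN)
  with closed_H show ?thesis
    unfolding souslin_set_def G_def souslin_souslin_bounded F(2) by blast
qed

lemma continuous_image_borel_lebesgue: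
  fixes h :: "'b::euclidean_space \<Rightarrow> 'a::euclidean_space"
  assumes "continuous_on UNIV h" "E \<in> sets borel"
  shows "h ` E \<in> sets lebesgue"
  using assms by (intro souslin_set_lebesgue souslin_set_continuous_image souslin_set_borel)


section \<open>Measurability of the convolutions\<close>

lemma lebesgue_measurable_INF_shift:
  fixes \<phi> :: "'a::euclidean_space \<times> 'a \<Rightarrow> ereal"
  assumes \<phi>: "\<phi> \<in> borel_measurable borel"
  shows "(\<lambda>x. INF y. \<phi> (x - y, y)) \<in> borel_measurable lebesgue"
  unfolding borel_measurable_ereal_iff_Iio
proof
  fix a
  have "(\<lambda>x. INF y. \<phi> (x - y, y)) -` {..<a} \<inter> space lebesgue
      = (\<lambda>(z, y). z + y) ` {p. \<phi> p < a}"
  proof (intro equalityI subsetI)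
    fix x assume "x \<in> (\<lambda>x. INF y. \<phi> (x - y, y)) -` {..<a} \<inter> space lebesgue"
    then obtain y where "\<phi> (x - y, y) < a"
      by (auto simp: INF_less_iff)
    then show "x \<in> (\<lambda>(z, y). z + y) ` {p. \<phi> p < a}"
      by (intro image_eqI[of _ _ "(x - y, y)"]) auto
  next
    fix x assume "x \<in> (\<lambda>(z, y). z + y) ` {p. \<phi> p < a}"
    then obtain z y where "x = z + y" "\<phi> (z, y) < a"
      by auto
    then show "x \<in> (\<lambda>x. INF y. \<phi> (x - y, y)) -` {..<a} \<inter> space lebesgue"
      by (auto simp: INF_less_iff intro!: exI[of _ y])
  qed
  also have "\<dots> \<in> sets lebesgue"
  proof (rule continuous_image_borel_lebesgue)
    show "continuous_on UNIV (\<lambda>(z, y). z + y :: 'a)"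
      by (simp add: case_prod_unfold continuous_intros)
    have "\<phi> -` {..<a} \<inter> space borel \<in> sets borel"
      using \<phi> unfolding borel_measurable_ereal_iff_Iio by blast
    then show "{p. \<phi> p < a} \<in> sets borel"
      by (simp add: vimage_def)
  qed
  finally show "(\<lambda>x. INF y. \<phi> (x - y, y)) -` {..<a} \<inter> space lebesgue \<in> sets lebesgue" .
qed

lemma infconv_lebesgue_measurable:
  fixes f g :: "'a::euclidean_space \<Rightarrow> ereal"
  assumes "f \<in> borel_measurable borel" "g \<in> borel_measurable borel"
  shows "infconv f g \<in> borel_measurable lebesgue"
proof -
  have "(\<lambda>(z, y). f z + g y) \<in> borel_measurable (borel :: ('a \<times> 'a) measure)"
    using assms by (simp add: case_prod_unfold borel_prod[symmetric])
  from lebesgue_measurable_INF_shift[OF this] show ?thesis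
    by (simp add: infconv_def[abs_def])
qed

lemma levconv_lebesgue_measurable:
  fixes f g :: "'a::euclidean_space \<Rightarrow> ereal"
  assumes "f \<in> borel_measurable borel" "g \<in> borel_measurable borel"
  shows "levconv f g \<in> borel_measurable lebesgue"
proof -
  have "(\<lambda>(z, y). max (f z) (g y)) \<in> borel_measurable (borel :: ('a \<times> 'a) measure)"
    using assms by (simp add: case_prod_unfold borel_prod[symmetric])
  from lebesgue_measurable_INF_shift[OF this] show ?thesis
    by (simp add: levconv_def[abs_def])
qed


section \<open>Integrability of reciprocals with polynomial growth\<close>

lemma norm_powr_le_dyadic_sum:
  fixes x :: "'a::real_normed_vector"
  assumes "0 < \<beta>"
  shows "indicator {x. 1 \<le> norm x} x * ennreal (norm x powr -\<beta>)
     \<le> (\<Sum>k. indicator (ball 0 (2 ^ Suc k)) x * ennreal ((2 powr -\<beta>) ^ k))"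
proof (cases "1 \<le> norm x")
  case True
  define k where "k = nat \<lfloor>log 2 (norm x)\<rfloor>"
  have "0 \<le> log 2 (norm x)"
    using True by (subst zero_le_log_cancel_iff) auto
  then have k: "real k \<le> log 2 (norm x)" "log 2 (norm x) < real k + 1"
    unfolding k_def by linarith+
  have "2 ^ k = 2 powr real k"
    by (simp add: powr_realpow)
  also have "\<dots> \<le> 2 powr log 2 (norm x)"
    using k(1) by simp
  also have "\<dots> = norm x"
    using True by (intro powr_log_cancel) auto
  finally have lower: "2 ^ k \<le> norm x" .
  have "norm x = 2 powr log 2 (norm x)"
    using True by (intro powr_log_cancel[symmetric]) auto
  also have "\<dots> < 2 powr (real k + 1)"
    using k(2) by simp
  also have "\<dots> = 2 ^ Suc k"
    by (simp add: powr_realpow[symmetric] powr_add)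
  finally have upper: "norm x < 2 ^ Suc k" .
  have "norm x powr -\<beta> \<le> (2 ^ k) powr -\<beta>"
    using assms lower by (intro powr_mono2') auto
  also have "\<dots> = (2 powr -\<beta>) ^ k"
    by (simp add: powr_realpow[symmetric] powr_powr powr_power mult.commute)
  finally have "norm x powr -\<beta> \<le> (2 powr -\<beta>) ^ k" .
  with upper True have "indicator {x. 1 \<le> norm x} x * ennreal (norm x powr -\<beta>)
      \<le> indicator (ball 0 (2 ^ Suc k)) x * ennreal ((2 powr -\<beta>) ^ k)"
    by (simp add: indicator_def ennreal_leI)
  also have "\<dots> \<le> (\<Sum>k. indicator (ball 0 (2 ^ Suc k)) x * ennreal ((2 powr -\<beta>) ^ k))"
    using sum_le_suminf[OF summableI, of "{k}"] by simp
  finally show ?thesis .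
qed simp

lemma nn_integral_norm_powr_outside_ball_finite:
  assumes "real DIM('a) < \<beta>"
  shows "(\<integral>\<^sup>+x. indicator {x::'a::euclidean_space. 1 \<le> norm x} x * ennreal (norm x powr -\<beta>)
    \<partial>lborel) < \<infinity>"
proof -
  define q :: real where "q = 2 powr -\<beta>"
  define V where "V = unit_ball_vol (real DIM('a))"
  have V: "0 \<le> V"
    unfolding V_def by (simp add: unit_ball_vol_nonneg)
  have "0 < \<beta>"
    using assms by (metis of_nat_0_le_iff order_le_less_trans)
  then have "(\<integral>\<^sup>+x. indicator {x::'a. 1 \<le> norm x} x * ennreal (norm x powr -\<beta>) \<partial>lborel)
      \<le> (\<integral>\<^sup>+x. (\<Sum>k. indicator (ball (0::'a) (2 ^ Suc k)) x * ennreal (q ^ k)) \<partial>lborel)"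
    unfolding q_def by (intro nn_integral_mono norm_powr_le_dyadic_sum)
  also have "\<dots> = (\<Sum>k. \<integral>\<^sup>+x. indicator (ball (0::'a) (2 ^ Suc k)) x * ennreal (q ^ k) \<partial>lborel)"
    by (intro nn_integral_suminf borel_measurable_times_ennreal borel_measurable_indicator) auto
  also have "\<dots> = (\<Sum>k. ennreal (V * 2 ^ DIM('a) * (q * 2 ^ DIM('a)) ^ k))"
  proof (rule suminf_cong)
    fix k
    have "(\<integral>\<^sup>+x. indicator (ball (0::'a) (2 ^ Suc k)) x * ennreal (q ^ k) \<partial>lborel)
        = ennreal (q ^ k) * ennreal (V * (2 ^ Suc k) ^ DIM('a))"
      by (simp add: mult.commute nn_integral_cmult_indicator emeasure_ball V_def)
    also have "\<dots> = ennreal (V * 2 ^ DIM('a) * (q * 2 ^ DIM('a)) ^ k)"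
      using V by (simp add: q_def ennreal_mult[symmetric] power_mult_distrib
          power_mult[symmetric] mult_ac)
    finally show "(\<integral>\<^sup>+x. indicator (ball (0::'a) (2 ^ Suc k)) x * ennreal (q ^ k) \<partial>lborel)
        = ennreal (V * 2 ^ DIM('a) * (q * 2 ^ DIM('a)) ^ k)" .
  qed
  also have "\<dots> < \<infinity>"
  proof -
    have "q * 2 ^ DIM('a) = 2 powr (real DIM('a) - \<beta>)"
      by (simp add: q_def powr_realpow[symmetric] powr_add[symmetric])
    also have "\<dots> < 1"
      using assms by (simp add: powr_less_one)
    finally have "q * 2 ^ DIM('a) < 1" .
    moreover have q: "0 \<le> q * 2 ^ DIM('a)"
      by (simp add: q_def)
    ultimately have "summable (\<lambda>k. V * 2 ^ DIM('a) * (q * 2 ^ DIM('a)) ^ k)"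
      by (intro summable_mult summable_geometric) simp
    then have "(\<Sum>k. ennreal (V * 2 ^ DIM('a) * (q * 2 ^ DIM('a)) ^ k)) \<noteq> top"
      by (rule ennreal_suminf_neq_top) (use V q in simp)
    then show ?thesis
      by (simp add: less_top)
  qed
  finally show ?thesis .
qed

lemma recip_le_inverse:
  assumes "0 < e" "ereal e \<le> y"
  shows "recip y < top" "enn2real (recip y) \<le> 1 / e"
  using assms by (cases y; simp add: recip_def frac_le)+

lemma recip_powr_le_majorant:
  fixes h :: "'a::real_normed_vector \<Rightarrow> ereal"
  assumes d: "0 < d" "\<And>x. ereal d \<le> h x" and c: "0 < c"
    and growth: "\<And>x. R \<le> norm x \<Longrightarrow> ereal (c * norm x powr \<alpha>) \<le> h x" and p: "0 \<le> p"
  shows "ennreal (enn2real (recip (h x)) powr p)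
    \<le> ennreal ((1 / d) powr p) * indicator (cball 0 (max R 1)) x
      + ennreal (c powr -p) * (indicator {x. 1 \<le> norm x} x * ennreal (norm x powr -(\<alpha> * p)))"
proof (cases "norm x \<le> max R 1")
  case True
  have "enn2real (recip (h x)) powr p \<le> (1 / d) powr p"
    using recip_le_inverse[OF d(1) d(2)] p by (intro powr_mono2) auto
  then show ?thesis
    using True by (intro add_increasing2) (auto simp: ennreal_leI)
next
  case False
  then have x: "R \<le> norm x" "1 \<le> norm x"
    by auto
  then have e: "0 < c * norm x powr \<alpha>"
    using c by (simp add: zero_less_norm_iff[symmetric] del: zero_less_norm_iff)
  have "enn2real (recip (h x)) powr p \<le> (1 / (c * norm x powr \<alpha>)) powr p"
    using recip_le_inverse[OF e growth[OF x(1)]] p by (intro powr_mono2) auto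
  also have "\<dots> = c powr -p * norm x powr -(\<alpha> * p)"
    using c x by (simp add: powr_divide powr_mult powr_powr powr_minus_divide)
  finally show ?thesis
    using x by (intro add_increasing) (auto simp: ennreal_mult[symmetric] ennreal_leI)
qed

lemma nn_integral_majorant_finite:
  assumes "real DIM('a) < \<beta>"
  shows "(\<integral>\<^sup>+x. ennreal a * indicator (cball (0::'a::euclidean_space) r) x
    + ennreal b * (indicator {x. 1 \<le> norm x} x * ennreal (norm x powr -\<beta>)) \<partial>lborel) < \<infinity>"
proof -
  have "(\<integral>\<^sup>+x. ennreal a * indicator (cball (0::'a) r) x
      + ennreal b * (indicator {x. 1 \<le> norm x} x * ennreal (norm x powr -\<beta>)) \<partial>lborel)
    = ennreal a * emeasure lborel (cball (0::'a) r)
      + ennreal b * (\<integral>\<^sup>+x. indicator {x::'a. 1 \<le> norm x} x * ennreal (norm x powr -\<beta>) \<partial>lborel)"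
    by (subst nn_integral_add)
      (auto simp: nn_integral_cmult nn_integral_cmult_indicator mult.commute
        intro!: borel_measurable_times_ennreal borel_measurable_indicator)
  also have "\<dots> < \<infinity>"
    using emeasure_lborel_cball_finite[of "0::'a" r] nn_integral_norm_powr_outside_ball_finite[OF assms]
    by (simp add: less_top[symmetric] ennreal_mult_eq_top_iff)
  finally show ?thesis .
qed

lemma in_Lp_recip:
  fixes h :: "'a::euclidean_space \<Rightarrow> ereal"
  assumes h: "h \<in> borel_measurable lebesgue" and d: "0 < d" "\<And>x. ereal d \<le> h x"
    and c: "0 < c" and growth: "\<And>x. R \<le> norm x \<Longrightarrow> ereal (c * norm x powr \<alpha>) \<le> h x"
    and \<alpha>: "0 < \<alpha>" and p: "real DIM('a) / \<alpha> < p"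
  shows "in_Lp (\<lambda>x. recip (h x)) p"
  unfolding in_Lp_def
proof (intro conjI)
  show "(\<lambda>x. recip (h x)) \<in> borel_measurable lebesgue"
    using h by (simp add: recip_def)
  show "AE x in lebesgue. recip (h x) < top"
    using recip_le_inverse(1)[OF d] by simp
  have "real DIM('a) < \<alpha> * p"
    using p \<alpha> by (simp add: pos_divide_less_eq mult.commute)
  have "0 \<le> p"
    using p \<alpha> by (smt (verit) divide_nonneg_pos of_nat_0_le_iff)
  have "(\<integral>\<^sup>+x. ennreal (enn2real (recip (h x)) powr p) \<partial>lebesgue)
      = (\<integral>\<^sup>+x. ennreal (enn2real (recip (h x)) powr p) \<partial>lborel)"
    by (rule nn_integral_completion)
  also have "\<dots> \<le> (\<integral>\<^sup>+x. ennreal ((1 / d) powr p) * indicator (cball (0::'a) (max R 1)) x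
        + ennreal (c powr -p) * (indicator {x. 1 \<le> norm x} x * ennreal (norm x powr -(\<alpha> * p)))
        \<partial>lborel)"
    by (rule nn_integral_mono) (rule recip_powr_le_majorant[OF d c growth \<open>0 \<le> p\<close>])
  also have "\<dots> < \<infinity>"
    by (rule nn_integral_majorant_finite) fact
  finally show "(\<integral>\<^sup>+x. ennreal (enn2real (recip (h x)) powr p) \<partial>lebesgue) < top"
    by simp
qed


section \<open>Lower bounds for the convolutions\<close>

lemma growth_of_one_summand:
  fixes f g :: "'a::real_normed_vector \<Rightarrow> ereal"
  assumes growth: "\<And>z. R \<le> norm z \<Longrightarrow> ereal (c * norm z powr \<alpha>) \<le> f z \<and> ereal (c * norm z powr \<alpha>) \<le> g z"
    and c: "0 < c" and \<alpha>: "0 < \<alpha>" and x: "2 * R \<le> norm x"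
  shows "ereal (c / 2 powr \<alpha> * norm x powr \<alpha>) \<le> f (x - y)
    \<or> ereal (c / 2 powr \<alpha> * norm x powr \<alpha>) \<le> g y"
proof -
  have half: "ereal (c / 2 powr \<alpha> * norm x powr \<alpha>) \<le> ereal (c * norm z powr \<alpha>)"
    if "norm x / 2 \<le> norm z" for z :: 'a
  proof -
    have "c / 2 powr \<alpha> * norm x powr \<alpha> = c * (norm x / 2) powr \<alpha>"
      by (simp add: powr_divide)
    also have "\<dots> \<le> c * norm z powr \<alpha>"
      using that c \<alpha> by (intro mult_left_mono powr_mono2) auto
    finally show ?thesis
      by simp
  qed
  have "norm x \<le> norm (x - y) + norm y"
    using norm_triangle_ineq[of "x - y" y] by simp
  then consider "norm x / 2 \<le> norm y" | "norm x / 2 \<le> norm (x - y)"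
    by linarith
  then show ?thesis
  proof cases
    case 1
    then have "R \<le> norm y"
      using x by linarith
    with growth half[OF 1] show ?thesis
      using order_trans by blast
  next
    case 2
    then have "R \<le> norm (x - y)"
      using x by linarith
    with growth half[OF 2] show ?thesis
      using order_trans by blast
  qed
qed

lemma Inf_add_Inf_le_infconv: "Inf (range f) + Inf (range g) \<le> infconv f g x"
  unfolding infconv_def by (intro INF_greatest add_mono INF_lower) auto

lemma infconv_positive_lower_bound:
  assumes "0 < Inf (range f) + Inf (range g)"
  obtains d where "0 < d" "\<And>x. ereal d \<le> infconv f g x"
proof -
  obtain d where "0 < ereal d" "ereal d < Inf (range f) + Inf (range g)"
    using ereal_dense2[OF assms] by blast
  with Inf_add_Inf_le_infconv[of f g] that show thesis
    by (meson ereal_less(2) less_imp_le order_trans)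
qed

lemma infconv_growth:
  fixes f g :: "'a::real_normed_vector \<Rightarrow> ereal"
  assumes a: "\<And>z. ereal a \<le> f z" and b: "\<And>z. ereal b \<le> g z"
    and growth: "\<And>z. R \<le> norm z \<Longrightarrow> ereal (c * norm z powr \<alpha>) \<le> f z \<and> ereal (c * norm z powr \<alpha>) \<le> g z"
    and c: "0 < c" and \<alpha>: "0 < \<alpha>" and x: "2 * R \<le> norm x"
  shows "ereal (min a b + c / 2 powr \<alpha> * norm x powr \<alpha>) \<le> infconv f g x"
  unfolding infconv_def
proof (rule INF_greatest)
  fix y
  let ?m = "c / 2 powr \<alpha> * norm x powr \<alpha>"
  consider "ereal ?m \<le> f (x - y)" | "ereal ?m \<le> g y"
    using growth_of_one_summand[OF growth c \<alpha> x] by blast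
  then show "ereal (min a b + ?m) \<le> f (x - y) + g y"
  proof cases
    case 1
    have "ereal (min a b + ?m) \<le> ereal ?m + ereal b"
      by simp
    also have "\<dots> \<le> f (x - y) + g y"
      using 1 b by (rule add_mono)
    finally show ?thesis .
  next
    case 2
    have "ereal (min a b + ?m) \<le> ereal a + ereal ?m"
      by simp
    also have "\<dots> \<le> f (x - y) + g y"
      using a 2 by (rule add_mono)
    finally show ?thesis .
  qed
qed

lemma levconv_growth:
  fixes f g :: "'a::real_normed_vector \<Rightarrow> ereal"
  assumes growth: "\<And>z. R \<le> norm z \<Longrightarrow> ereal (c * norm z powr \<alpha>) \<le> f z \<and> ereal (c * norm z powr \<alpha>) \<le> g z"
    and c: "0 < c" and \<alpha>: "0 < \<alpha>" and x: "2 * R \<le> norm x"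
  shows "ereal (c / 2 powr \<alpha> * norm x powr \<alpha>) \<le> levconv f g x"
  unfolding levconv_def
  using growth_of_one_summand[OF growth c \<alpha> x] by (auto intro: INF_greatest simp: le_max_iff_disj)

lemma levconv_positive_lower_bound:
  assumes g: "\<And>x. 0 \<le> g x" and pos: "0 < Inf (range (\<lambda>x. max (f x) 0)) + Inf (range g)"
  obtains d where "0 < d" "\<And>x. ereal d \<le> levconv f g x"
proof -
  define A where "A = Inf (range (\<lambda>x. max (f x) 0))"
  define B where "B = Inf (range g)"
  have "0 \<le> A" "0 \<le> B"
    unfolding A_def B_def using g by (auto intro: INF_greatest)
  with pos have "0 < max A B"
    unfolding A_def[symmetric] B_def[symmetric] by (cases A; cases B) (auto simp: max_def)
  then obtain d where d: "0 < d" "ereal d \<le> max A B"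
    using ereal_dense2[of 0 "max A B"] by (auto intro: less_imp_le)
  have "max A B \<le> levconv f g x" for x
    unfolding levconv_def
  proof (rule INF_greatest)
    fix y
    have "A \<le> max (f (x - y)) 0" "B \<le> g y"
      unfolding A_def B_def by (auto intro: INF_lower)
    then show "max A B \<le> max (f (x - y)) (g y)"
      using g[of y] by (auto simp: max_def split: if_splits)
  qed
  with d show thesis
    using that order_trans by blast
qed

lemma positive_half_growth:
  fixes c \<alpha> \<mu> :: real
  assumes c: "0 < c" and \<alpha>: "0 < \<alpha>"
  obtains R where "\<And>t. R \<le> t \<Longrightarrow> c / 2 * t powr \<alpha> \<le> \<mu> + c * t powr \<alpha>"
proof
  fix t assume t: "max 0 ((2 * \<bar>\<mu>\<bar> / c) powr (1 / \<alpha>)) \<le> t"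
  have "2 * \<bar>\<mu>\<bar> / c = ((2 * \<bar>\<mu>\<bar> / c) powr (1 / \<alpha>)) powr \<alpha>"
    using c \<alpha> by (simp add: powr_powr)
  also have "\<dots> \<le> t powr \<alpha>"
    using t \<alpha> by (intro powr_mono2) auto
  finally have "2 * \<bar>\<mu>\<bar> \<le> c * t powr \<alpha>"
    using c by (simp add: field_simps)
  then show "c / 2 * t powr \<alpha> \<le> \<mu> + c * t powr \<alpha>"
    by linarith
qed

lemma infconv_eventual_growth:
  fixes f g :: "'a::real_normed_vector \<Rightarrow> ereal"
  assumes "\<bar>Inf (range f)\<bar> \<noteq> \<infinity>" "\<bar>Inf (range g)\<bar> \<noteq> \<infinity>"
    and growth: "\<And>z. R \<le> norm z \<Longrightarrow> ereal (c * norm z powr \<alpha>) \<le> f z \<and> ereal (c * norm z powr \<alpha>) \<le> g z"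
    and c: "0 < c" and \<alpha>: "0 < \<alpha>"
  obtains R' where "\<And>x. R' \<le> norm x \<Longrightarrow> ereal (c / 2 powr \<alpha> / 2 * norm x powr \<alpha>) \<le> infconv f g x"
proof -
  obtain a b where "Inf (range f) = ereal a" "Inf (range g) = ereal b"
    using assms(1,2) by force
  then have a: "ereal a \<le> f z" and b: "ereal b \<le> g z" for z
    by (metis INF_lower UNIV_I)+
  have c': "0 < c / 2 powr \<alpha>"
    using c by simp
  obtain R' where R': "\<And>t. R' \<le> t \<Longrightarrow>
      c / 2 powr \<alpha> / 2 * t powr \<alpha> \<le> min a b + c / 2 powr \<alpha> * t powr \<alpha>"
    using positive_half_growth[OF c' \<alpha>] by blast
  show thesis
  proof (rule that[of "max (2 * R) R'"])
    fix x :: 'a assume "max (2 * R) R' \<le> norm x"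
    then have x: "2 * R \<le> norm x" "R' \<le> norm x"
      by auto
    have "ereal (c / 2 powr \<alpha> / 2 * norm x powr \<alpha>) \<le> ereal (min a b + c / 2 powr \<alpha> * norm x powr \<alpha>)"
      using R'[OF x(2)] by simp
    also have "\<dots> \<le> infconv f g x"
      by (rule infconv_growth[OF a b growth c \<alpha> x(1)])
    finally show "ereal (c / 2 powr \<alpha> / 2 * norm x powr \<alpha>) \<le> infconv f g x" .
  qed
qed

theorem theorem22:
  fixes f g :: "'a::euclidean_space \<Rightarrow> ereal" and c \<alpha> :: real
  assumes fmeas: "f \<in> borel_measurable borel" and gmeas: "g \<in> borel_measurable borel"
    and fnm: "\<And>x. f x \<noteq> -\<infinity>" and gnm: "\<And>x. g x \<noteq> -\<infinity>"
    and c: "c > 0" and \<alpha>: "\<alpha> > 0"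
    and growth: "\<exists>R. \<forall>x. norm x \<ge> R \<longrightarrow>
                   f x \<ge> ereal (c * norm x powr \<alpha>) \<and> g x \<ge> ereal (c * norm x powr \<alpha>)"
  shows "(\<bar>Inf (range f)\<bar> \<noteq> \<infinity> \<and> \<bar>Inf (range g)\<bar> \<noteq> \<infinity> \<and> Inf (range f) + Inf (range g) > 0
            \<longrightarrow> (\<forall>p::real. p \<ge> 1 \<and> p > real DIM('a) / \<alpha> \<longrightarrow> in_Lp (\<lambda>x. recip (infconv f g x)) p))
       \<and> ((\<forall>x. g x \<ge> 0) \<and> Inf (range (\<lambda>x. max (f x) 0)) + Inf (range g) > 0
            \<longrightarrow> (\<forall>p::real. p \<ge> 1 \<and> p > real DIM('a) / \<alpha> \<longrightarrow> in_Lp (\<lambda>x. recip (levconv f g x)) p))"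
proof -
  obtain R where R: "\<And>z. R \<le> norm z \<Longrightarrow>
      ereal (c * norm z powr \<alpha>) \<le> f z \<and> ereal (c * norm z powr \<alpha>) \<le> g z"
    using growth by blast
  have c': "0 < c / 2 powr \<alpha>" "0 < c / 2 powr \<alpha> / 2"
    using c by simp_all
  show ?thesis
  proof (intro conjI impI allI; elim conjE)
    fix p
    assume fin: "\<bar>Inf (range f)\<bar> \<noteq> \<infinity>" "\<bar>Inf (range g)\<bar> \<noteq> \<infinity>"
      and pos: "0 < Inf (range f) + Inf (range g)" and p: "real DIM('a) / \<alpha> < p"
    obtain d where d: "0 < d" "\<And>x. ereal d \<le> infconv f g x"
      using infconv_positive_lower_bound[OF pos] by blast
    obtain R' where "\<And>x. R' \<le> norm x \<Longrightarrow> ereal (c / 2 powr \<alpha> / 2 * norm x powr \<alpha>) \<le> infconv f g x"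
      using infconv_eventual_growth[OF fin R c \<alpha>] by blast
    from in_Lp_recip[OF infconv_lebesgue_measurable[OF fmeas gmeas] d c'(2) this \<alpha> p]
    show "in_Lp (\<lambda>x. recip (infconv f g x)) p" .
  next
    fix p
    assume "\<forall>x. 0 \<le> g x" "0 < Inf (range (\<lambda>x. max (f x) 0)) + Inf (range g)"
      and p: "real DIM('a) / \<alpha> < p"
    then obtain d where d: "0 < d" "\<And>x. ereal d \<le> levconv f g x"
      using levconv_positive_lower_bound by metis
    from in_Lp_recip[OF levconv_lebesgue_measurable[OF fmeas gmeas] d c'(1)
        levconv_growth[OF R c \<alpha>] \<alpha> p]
    show "in_Lp (\<lambda>x. recip (levconv f g x)) p" .
  qed
qed

end
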